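(* Consider a SOCO problem with norm $\|\cdot\|$, let $\theta\ge1$ and $N(\cdot)=\theta\|\cdot\|$. Then the expected operating cost of RBG($N$) satisfies $\mathbb{E}[OC(RBG(N))]\le OPT_N$.
   Context: The decision space $F\subseteq(\mathbb{R}^+)^n$ is convex and compact, $\|\cdot\|$ is a norm on $\mathbb{R}^n$, and the cost functions $c^t:F\to\mathbb{R}^+$ are convex with uniformly bounded subgradients. Algorithm RBG($N$): define $w^0(x)=N(x)$ and $w^t(x)=\min_{y\in F}\{w^{t-1}(y)+c^t(y)+N(x-y)\}$; draw $r$ uniformly at random from $(-1,1)$ once; at each time $t$ choose $x^t\in F$ minimizing $Y^t(x)=w^{t-1}(x)+rN(x)$ (so $x^{t+1}$ is chosen after seeing $c^t$). Operating cost: $OC(RBG(N))=\sum_{t=1}^Tc^t(x^{t+1})$. $OPT_N=\min_{(x^1,\dots,x^T)\in F^T}\sum_{t=1}^Tc^t(x^t)+N(x^t-x^{t-1})$ with $x^0=0$. The expectation is over $r$. *)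

theory Defs
  imports "HOL-Analysis.Analysis"
begin

definition is_norm :: "('a::real_vector \<Rightarrow> real) \<Rightarrow> bool" where
  "is_norm nrm \<longleftrightarrow>
     (\<forall>x. 0 \<le> nrm x) \<and> (\<forall>x. nrm x = 0 \<longleftrightarrow> x = 0) \<and>
     (\<forall>a x. nrm (a *\<^sub>R x) = \<bar>a\<bar> * nrm x) \<and>
     (\<forall>x y. nrm (x + y) \<le> nrm x + nrm y)"

definition is_subgradient :: "('a::real_inner \<Rightarrow> real) \<Rightarrow> 'a \<Rightarrow> 'a \<Rightarrow> bool" where
  "is_subgradient f x g \<longleftrightarrow> (\<forall>y. f x + inner g (y - x) \<le> f y)"

fun rbg_w :: "('a::real_vector \<Rightarrow> real) \<Rightarrow> (nat \<Rightarrow> 'a \<Rightarrow> real) \<Rightarrow> 'a set \<Rightarrow> nat \<Rightarrow> 'a \<Rightarrow> real" where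
  "rbg_w N c F 0 x = N x"
| "rbg_w N c F (Suc t) x = (INF y\<in>F. rbg_w N c F t y + c (Suc t) y + N (x - y))"

definition rbg_choice :: "('a::real_vector \<Rightarrow> real) \<Rightarrow> (nat \<Rightarrow> 'a \<Rightarrow> real) \<Rightarrow> 'a set \<Rightarrow> real \<Rightarrow> nat \<Rightarrow> 'a \<Rightarrow> bool" where
  "rbg_choice N c F r t x \<longleftrightarrow> x \<in> F \<and>
     (\<forall>y\<in>F. rbg_w N c F (t - 1) x + r * N x \<le> rbg_w N c F (t - 1) y + r * N y)"

definition opt_N :: "('a::real_vector \<Rightarrow> real) \<Rightarrow> (nat \<Rightarrow> 'a \<Rightarrow> real) \<Rightarrow> 'a set \<Rightarrow> nat \<Rightarrow> real" where
  "opt_N N c F T = Inf {(\<Sum>t\<in>{1..T}. c t (x t) + N (x t - x (t - 1))) | x.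
                         x 0 = 0 \<and> (\<forall>t\<in>{1..T}. x t \<in> F)}"

end

theory Submission
  imports Defs
begin

text \<open>
  Fix the random draw r with \<open>\<bar>r\<bar> < 1\<close> and write \<open>w\<^sup>t\<close> for the work functions.
  Since \<open>w\<^sup>t(x) = w\<^sup>t\<^sup>-\<^sup>1(y) + c\<^sup>t(y) + N(x - y)\<close> for some \<open>y \<in> F\<close>, and
  \<open>w\<^sup>t(y) \<le> w\<^sup>t\<^sup>-\<^sup>1(y) + c\<^sup>t(y)\<close>, a minimiser \<open>x\<^sup>t\<^sup>+\<^sup>1\<close> of \<open>w\<^sup>t + rN\<close> must satisfy
  \<open>(1 - \<bar>r\<bar>) N(x\<^sup>t\<^sup>+\<^sup>1 - y) \<le> 0\<close>, i.e. \<open>y = x\<^sup>t\<^sup>+\<^sup>1\<close> and \<open>w\<^sup>t(x\<^sup>t\<^sup>+\<^sup>1) = w\<^sup>t\<^sup>-\<^sup>1(x\<^sup>t\<^sup>+\<^sup>1) + c\<^sup>t(x\<^sup>t\<^sup>+\<^sup>1)\<close>.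
  Hence the potential \<open>w\<^sup>t\<^sup>-\<^sup>1(x\<^sup>t) + rN(x\<^sup>t)\<close> grows by at least \<open>c\<^sup>t(x\<^sup>t\<^sup>+\<^sup>1)\<close> in every step,
  so the operating cost is at most \<open>w\<^sup>T(x\<^sup>T\<^sup>+\<^sup>1) + rN(x\<^sup>T\<^sup>+\<^sup>1) \<le> w\<^sup>T(y\<^sup>T) + rN(y\<^sup>T)\<close> for any
  trajectory y, and \<open>w\<^sup>T(y\<^sup>T)\<close> is at most the cost of y. The bound is affine in r,
  and averaging over r removes the term \<open>rN(y\<^sup>T)\<close>.
\<close>

lemma is_norm_zero: "is_norm N \<Longrightarrow> N 0 = 0"
  unfolding is_norm_def by blast

lemma is_norm_nonneg: "is_norm N \<Longrightarrow> 0 \<le> N x"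
  unfolding is_norm_def by blast

lemma is_norm_scaleR: "is_norm N \<Longrightarrow> N (a *\<^sub>R x) = \<bar>a\<bar> * N x"
  unfolding is_norm_def by blast

lemma is_norm_triangle: "is_norm N \<Longrightarrow> N (x + y) \<le> N x + N y"
  unfolding is_norm_def by blast

lemma is_norm_minus_commute: "is_norm N \<Longrightarrow> N (x - y) = N (y - x)"
  using is_norm_scaleR[of N "-1" "x - y"] by simp

lemma is_norm_triangle_diff: "is_norm N \<Longrightarrow> N x \<le> N y + N (x - y)"
  using is_norm_triangle[of N y "x - y"] by simp

lemma is_norm_scale:
  assumes "is_norm N" "0 < \<theta>"
  shows "is_norm (\<lambda>x. \<theta> * N x)"
  using assms unfolding is_norm_def
  by (auto simp: distrib_left[symmetric] intro: mult_left_mono)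

lemma is_norm_sum: "is_norm N \<Longrightarrow> N (sum f A) \<le> (\<Sum>i\<in>A. N (f i))"
proof (induction A rule: infinite_finite_induct)
  case (insert a A)
  then show ?case using is_norm_triangle[of N "f a" "sum f A"] by simp
qed (simp_all add: is_norm_zero)

lemma is_norm_le_mult_norm:
  fixes N :: "'a::euclidean_space \<Rightarrow> real"
  assumes N: "is_norm N"
  shows "\<exists>C\<ge>0. \<forall>v. N v \<le> C * norm v"
proof (intro exI conjI allI)
  show "0 \<le> (\<Sum>b\<in>Basis. N b)"
    by (simp add: sum_nonneg is_norm_nonneg[OF N])
  fix v :: 'a
  have "N v = N (\<Sum>b\<in>Basis. inner v b *\<^sub>R b)"
    by (simp add: euclidean_representation)
  also have "\<dots> \<le> (\<Sum>b\<in>Basis. \<bar>inner v b\<bar> * N b)"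
    using is_norm_sum[OF N, of "\<lambda>b. inner v b *\<^sub>R b" Basis]
    by (simp add: is_norm_scaleR[OF N])
  also have "\<dots> \<le> (\<Sum>b\<in>Basis. norm v * N b)"
    by (intro sum_mono mult_right_mono Basis_le_norm is_norm_nonneg[OF N])
  also have "\<dots> = (\<Sum>b\<in>Basis. N b) * norm v"
    by (simp add: sum_distrib_left mult.commute)
  finally show "N v \<le> (\<Sum>b\<in>Basis. N b) * norm v" .
qed

lemma continuous_on_norm_lipschitz:
  fixes N :: "'a::euclidean_space \<Rightarrow> real"
  assumes N: "is_norm N" and f: "\<And>x z. f x \<le> f z + N (x - z)"
  shows "continuous_on S f"
proof -
  obtain C where "0 \<le> C" and C: "\<And>v. N v \<le> C * norm v"
    using is_norm_le_mult_norm[OF N] by blast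
  have "C-lipschitz_on S f"
  proof (rule lipschitz_onI)
    fix x z
    have "\<bar>f x - f z\<bar> \<le> N (x - z)"
      using f[of x z] f[of z x] is_norm_minus_commute[OF N, of x z] by linarith
    then show "dist (f x) (f z) \<le> C * dist x z"
      using C[of "x - z"] by (simp add: dist_real_def dist_norm)
  qed (fact \<open>0 \<le> C\<close>)
  then show ?thesis
    by (rule lipschitz_on_continuous_on)
qed

definition soco_cost :: "('a::real_vector \<Rightarrow> real) \<Rightarrow> (nat \<Rightarrow> 'a \<Rightarrow> real) \<Rightarrow> nat \<Rightarrow> (nat \<Rightarrow> 'a) \<Rightarrow> real" where
  "soco_cost N c T y = (\<Sum>t\<in>{1..T}. c t (y t) + N (y t - y (t - 1)))"

lemma opt_N_soco_cost:
  "opt_N N c F T = Inf {soco_cost N c T y | y. y 0 = 0 \<and> (\<forall>t\<in>{1..T}. y t \<in> F)}"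
  unfolding opt_N_def soco_cost_def ..

context
  fixes N :: "'a::euclidean_space \<Rightarrow> real" and c :: "nat \<Rightarrow> 'a \<Rightarrow> real"
    and F :: "'a set" and T :: nat
  assumes N: "is_norm N" and F_compact: "compact F" and F_ne: "F \<noteq> {}"
    and c_nonneg: "\<forall>t\<in>{1..T}. \<forall>x\<in>F. 0 \<le> c t x"
    and c_cont: "\<forall>t\<in>{1..T}. continuous_on F (c t)"
begin

abbreviation W :: "nat \<Rightarrow> 'a \<Rightarrow> real" where
  "W \<equiv> rbg_w N c F"

lemma rbg_w_nonneg: "t \<le> T \<Longrightarrow> 0 \<le> W t x"
proof (induction t arbitrary: x)
  case 0
  then show ?case by (simp add: is_norm_nonneg[OF N])
next
  case (Suc t)
  then show ?case
    using c_nonneg F_ne by (auto intro!: cINF_greatest add_nonneg_nonneg is_norm_nonneg[OF N])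
qed

lemma bdd_below_rbg_w_step:
  "Suc t \<le> T \<Longrightarrow> bdd_below ((\<lambda>y. W t y + c (Suc t) y + N (x - y)) ` F)"
  using rbg_w_nonneg c_nonneg
  by (intro bdd_belowI[of _ 0]) (auto intro!: add_nonneg_nonneg is_norm_nonneg[OF N])

lemma rbg_w_Suc_le:
  "Suc t \<le> T \<Longrightarrow> y \<in> F \<Longrightarrow> W (Suc t) x \<le> W t y + c (Suc t) y + N (x - y)"
  unfolding rbg_w.simps by (rule cINF_lower[OF bdd_below_rbg_w_step])

lemma rbg_w_Suc_le_same: "Suc t \<le> T \<Longrightarrow> y \<in> F \<Longrightarrow> W (Suc t) y \<le> W t y + c (Suc t) y"
  using rbg_w_Suc_le[of t y y] by (simp add: is_norm_zero[OF N])

lemma rbg_w_lipschitz: "t \<le> T \<Longrightarrow> W t x \<le> W t z + N (x - z)"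
proof (induction t)
  case 0
  then show ?case using is_norm_triangle_diff[OF N] by simp
next
  case (Suc s)
  have "W (Suc s) x - N (x - z) \<le> W (Suc s) z"
    unfolding rbg_w.simps(2)[of _ _ _ _ z]
  proof (rule cINF_greatest[OF F_ne])
    fix y assume "y \<in> F"
    then have "W (Suc s) x \<le> W s y + c (Suc s) y + N (x - y)"
      using rbg_w_Suc_le Suc.prems by simp
    moreover have "N (x - y) \<le> N (z - y) + N (x - z)"
      using is_norm_triangle_diff[OF N, of "x - y" "z - y"] by simp
    ultimately show "W (Suc s) x - N (x - z) \<le> W s y + c (Suc s) y + N (z - y)"
      by linarith
  qed
  then show ?case by simp
qed

lemma rbg_w_Suc_attained:
  assumes "Suc t \<le> T"
  shows "\<exists>y\<in>F. W (Suc t) x = W t y + c (Suc t) y + N (x - y)"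
proof -
  have "continuous_on F (\<lambda>y. W t y + c (Suc t) y + N (x - y))"
  proof (intro continuous_intros)
    show "continuous_on F (W t)"
      using assms by (intro continuous_on_norm_lipschitz[OF N] rbg_w_lipschitz) simp
    show "continuous_on F (c (Suc t))"
      using assms c_cont by simp
    show "continuous_on F (\<lambda>y. N (x - y))"
      by (intro continuous_on_compose2[OF continuous_on_norm_lipschitz[OF N, of N UNIV]]
          continuous_intros) (auto simp: is_norm_triangle_diff[OF N])
  qed
  then obtain y where "y \<in> F" and "\<forall>z\<in>F. W t y + c (Suc t) y + N (x - y) \<le> W t z + c (Suc t) z + N (x - z)"
    using continuous_attains_inf[OF F_compact F_ne] by blast
  then show ?thesis
    unfolding rbg_w.simps by (intro bexI[of _ y] cInf_eq_minimum) auto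
qed

lemma rbg_w_le_soco_cost:
  assumes "y 0 = 0" "\<forall>s\<in>{1..T}. y s \<in> F" "t \<le> T"
  shows "W t (y t) \<le> soco_cost N c t y"
  using assms(3)
proof (induction t)
  case 0
  then show ?case using assms(1) by (simp add: soco_cost_def is_norm_zero[OF N])
next
  case (Suc t)
  have "W (Suc t) (y (Suc t)) \<le> W t (y (Suc t)) + c (Suc t) (y (Suc t))"
    using rbg_w_Suc_le_same assms(2) Suc.prems by simp
  also have "\<dots> \<le> W t (y t) + N (y (Suc t) - y t) + c (Suc t) (y (Suc t))"
    using rbg_w_lipschitz Suc.prems by simp
  also have "\<dots> \<le> soco_cost N c (Suc t) y"
    using Suc by (simp add: soco_cost_def)
  finally show ?case .
qed

lemma rbg_choice_rbg_w_Suc_eq: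
  assumes t: "Suc t \<le> T" and r: "\<bar>r\<bar> < 1" and x: "rbg_choice N c F r (Suc (Suc t)) x"
  shows "W (Suc t) x = W t x + c (Suc t) x"
proof -
  obtain y where "y \<in> F" and y: "W (Suc t) x = W t y + c (Suc t) y + N (x - y)"
    using rbg_w_Suc_attained[OF t] by blast
  have "W (Suc t) x + r * N x \<le> W (Suc t) y + r * N y"
    using x \<open>y \<in> F\<close> unfolding rbg_choice_def by simp
  also have "\<dots> \<le> W t y + c (Suc t) y + r * N y"
    using rbg_w_Suc_le_same[OF t \<open>y \<in> F\<close>] by simp
  finally have "N (x - y) \<le> r * (N y - N x)"
    using y by (simp add: algebra_simps)
  also have "\<dots> \<le> \<bar>r\<bar> * \<bar>N y - N x\<bar>"
    by (metis abs_ge_self abs_mult)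
  also have "\<dots> \<le> \<bar>r\<bar> * N (x - y)"
    using is_norm_triangle_diff[OF N, of x y] is_norm_triangle_diff[OF N, of y x]
      is_norm_minus_commute[OF N, of x y]
    by (intro mult_left_mono) auto
  finally have "N (x - y) \<le> \<bar>r\<bar> * N (x - y)" .
  then have "N (x - y) = 0"
    using r is_norm_nonneg[OF N, of "x - y"] mult_strict_right_mono[of "\<bar>r\<bar>" 1 "N (x - y)"]
    by fastforce
  then have "x = y"
    using N unfolding is_norm_def by simp
  then show ?thesis
    using y by (simp add: is_norm_zero[OF N])
qed

lemma rbg_operating_cost_le:
  assumes r: "\<bar>r\<bar> < 1" and X: "\<forall>k\<ge>1. rbg_choice N c F r k (X k)"
  shows "(\<Sum>t\<in>{1..T}. c t (X (t + 1))) \<le> W T (X (T + 1)) + r * N (X (T + 1))"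
proof -
  have telescope:
    "(1 + r) * N (X 1) + (\<Sum>t\<in>{1..k}. c t (X (t + 1))) \<le> W k (X (k + 1)) + r * N (X (k + 1))"
    if "k \<le> T" for k
    using that
  proof (induction k)
    case 0
    then show ?case by (simp add: algebra_simps)
  next
    case (Suc k)
    have "W k (X (k + 1)) + r * N (X (k + 1)) \<le> W k (X (k + 2)) + r * N (X (k + 2))"
      using X[rule_format, of "k + 1"] X[rule_format, of "k + 2"] unfolding rbg_choice_def by simp
    also have "\<dots> = W (Suc k) (X (k + 2)) - c (Suc k) (X (k + 2)) + r * N (X (k + 2))"
      using rbg_choice_rbg_w_Suc_eq[OF Suc.prems r, of "X (k + 2)"] X by (simp add: numeral_2_eq_2)
    finally show ?case
      using Suc by (simp add: numeral_2_eq_2)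
  qed
  have "0 \<le> (1 + r) * N (X 1)"
    using r by (simp add: is_norm_nonneg[OF N])
  then show ?thesis
    using telescope[of T] by linarith
qed

lemma rbg_operating_cost_le_soco_cost:
  assumes r: "\<bar>r\<bar> < 1" and X: "\<forall>k\<ge>1. rbg_choice N c F r k (X k)"
    and y: "y 0 = 0" "\<forall>t\<in>{1..T}. y t \<in> F"
  shows "(\<Sum>t\<in>{1..T}. c t (X (t + 1))) \<le> soco_cost N c T y + r * N (y T)"
proof (cases "T = 0")
  case True
  then show ?thesis using y by (simp add: soco_cost_def is_norm_zero[OF N])
next
  case False
  have "W T (X (T + 1)) + r * N (X (T + 1)) \<le> W T (y T) + r * N (y T)"
    using X[rule_format, of "T + 1"] y False unfolding rbg_choice_def by simp
  then show ?thesis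
    using rbg_operating_cost_le[OF r X] rbg_w_le_soco_cost[OF y order.refl] by linarith
qed

end

lemma uniform_measure_unit_interval_eq_density:
  "uniform_measure lborel {-1<..<(1::real)} = density lborel (\<lambda>x. ennreal (indicator {-1<..<1} x / 2))"
  unfolding uniform_measure_def
  by (intro arg_cong[where f="density lborel"] ext)
    (simp split: split_indicator add: divide_ennreal divide_ennreal_def)

lemma
  fixes a b :: real
  shows integrable_uniform_affine: "integrable (uniform_measure lborel {-1<..<1}) (\<lambda>r. a + r * b)"
    and integral_uniform_affine: "integral\<^sup>L (uniform_measure lborel {-1<..<1}) (\<lambda>r. a + r * b) = a"
proof -
  let ?g = "\<lambda>x::real. indicator {-1<..<1} x / 2 :: real"
  let ?h = "\<lambda>x::real. (a / 2) * (1 * indicator {-1..1} x) + (b / 2) * (x ^ 1 * indicator {-1..1} x)"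
  have ae: "AE x in lborel. ?g x *\<^sub>R (a + x * b) = ?h x"
    using AE_lborel_singleton[of "1::real"] AE_lborel_singleton[of "-1::real"]
    by eventually_elim (auto split: split_indicator simp: algebra_simps)
  have int_1: "integrable lborel (\<lambda>x::real. 1 * indicator {-1..1} x :: real)"
    and int_x: "integrable lborel (\<lambda>x::real. x ^ 1 * indicator {-1..1} x :: real)"
    by (rule borel_integrable_atLeastAtMost; simp)+
  have "integrable lborel ?h"
    using int_1 int_x by simp
  then have "integrable lborel (\<lambda>x. ?g x *\<^sub>R (a + x * b))"
    using ae by (subst integrable_cong_AE) auto
  then show "integrable (uniform_measure lborel {-1<..<1}) (\<lambda>r. a + r * b)"
    unfolding uniform_measure_unit_interval_eq_density by (subst integrable_density) auto
  have "integral\<^sup>L (uniform_measure lborel {-1<..<1}) (\<lambda>r. a + r * b) = (\<integral>x. ?g x *\<^sub>R (a + x * b) \<partial>lborel)"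
    unfolding uniform_measure_unit_interval_eq_density by (subst integral_density) auto
  also have "\<dots> = (\<integral>x. ?h x \<partial>lborel)"
    using ae by (intro integral_cong_AE) auto
  also have "\<dots> = a"
    using int_1 int_x integral_power[of "-1::real" 1 1] by (simp add: content_real)
  finally show "integral\<^sup>L (uniform_measure lborel {-1<..<1}) (\<lambda>r. a + r * b) = a" .
qed

lemma integral_uniform_le_affine:
  fixes f :: "real \<Rightarrow> real"
  assumes f: "\<And>r. r \<in> {-1<..<1} \<Longrightarrow> f r \<le> a + r * b" and "0 \<le> a"
  shows "integral\<^sup>L (uniform_measure lborel {-1<..<1}) f \<le> a"
proof (cases "integrable (uniform_measure lborel {-1<..<1}) f")
  case True
  have "integral\<^sup>L (uniform_measure lborel {-1<..<1}) f
      \<le> integral\<^sup>L (uniform_measure lborel {-1<..<1}) (\<lambda>r. a + r * b)"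
    using f by (intro integral_mono_AE[OF True integrable_uniform_affine] AE_uniform_measureI) auto
  then show ?thesis
    by (simp add: integral_uniform_affine)
next
  case False
  then show ?thesis
    using \<open>0 \<le> a\<close> by (simp add: not_integrable_integral_eq)
qed

theorem lemma4:
  fixes F :: "(real ^ 'n) set"
    and nrm :: "real ^ 'n \<Rightarrow> real"
    and c :: "nat \<Rightarrow> real ^ 'n \<Rightarrow> real"
    and T :: nat
    and \<theta> :: real
    and X :: "nat \<Rightarrow> real \<Rightarrow> real ^ 'n"
  assumes F_convex: "convex F"
    and F_compact: "compact F"
    and F_nonneg: "\<forall>x\<in>F. \<forall>i. 0 \<le> x $ i"
    and norm: "is_norm nrm"
    and c_convex: "\<forall>t\<in>{1..T}. convex_on UNIV (c t)"
    and c_nonneg: "\<forall>t\<in>{1..T}. \<forall>x\<in>F. 0 \<le> c t x"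
    and c_subgrad_bounded:
      "\<exists>G. \<forall>t\<in>{1..T}. \<forall>x g. is_subgradient (c t) x g \<longrightarrow> norm g \<le> G"
    and theta: "1 \<le> \<theta>"
    and X_choice: "\<forall>r\<in>{-1<..<1}. \<forall>t\<ge>1.
                     rbg_choice (\<lambda>x. \<theta> * nrm x) c F r t (X t r)"
    and X_meas: "\<forall>t. X t \<in> borel_measurable (restrict_space borel {-1<..<(1::real)})"
  shows "integral\<^sup>L (uniform_measure lborel {-1<..<(1::real)})
            (\<lambda>r. \<Sum>t\<in>{1..T}. c t (X (t + 1) r))
         \<le> opt_N (\<lambda>x. \<theta> * nrm x) c F T"
proof -
  let ?N = "\<lambda>x. \<theta> * nrm x"
  have N: "is_norm ?N"
    using is_norm_scale[OF norm] theta by simp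
  have F_ne: "F \<noteq> {}"
    using X_choice[rule_format, of 0 1] unfolding rbg_choice_def by auto
  have c_cont: "\<forall>t\<in>{1..T}. continuous_on F (c t)"
    using c_convex by (metis continuous_on_subset convex_on_continuous open_UNIV subset_UNIV)
  have "integral\<^sup>L (uniform_measure lborel {-1<..<1}) (\<lambda>r. \<Sum>t\<in>{1..T}. c t (X (t + 1) r))
      \<le> soco_cost ?N c T y" if y: "y 0 = 0" "\<forall>t\<in>{1..T}. y t \<in> F" for y
  proof (rule integral_uniform_le_affine)
    show "(\<Sum>t\<in>{1..T}. c t (X (t + 1) r)) \<le> soco_cost ?N c T y + r * ?N (y T)"
      if "r \<in> {-1<..<1}" for r
      using that X_choice y
      by (intro rbg_operating_cost_le_soco_cost[OF N F_compact F_ne c_nonneg c_cont]) auto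
    show "0 \<le> soco_cost ?N c T y"
      unfolding soco_cost_def using c_nonneg y
      by (intro sum_nonneg add_nonneg_nonneg) (auto simp: is_norm_nonneg[OF N])
  qed
  moreover obtain f where "f \<in> F"
    using F_ne by blast
  then have "soco_cost ?N c T (\<lambda>t. if t = 0 then 0 else f)
      \<in> {soco_cost ?N c T y | y. y 0 = 0 \<and> (\<forall>t\<in>{1..T}. y t \<in> F)}"
    by auto
  ultimately show ?thesis
    unfolding opt_N_soco_cost by (intro cInf_greatest) auto
qed

end
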